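(* Let $K$ be a simplicial complex on $[m]$ which has a minimal Taylor resolution, and let $\Bbbk$ be a commutative ring. If $\Bbbk[K]$ is Golod, then any two distinct minimal non-faces of $K$ are not disjoint.
   Context: A minimal non-face of $K$ is a non-empty $N\subset[m]$ with $N\notin K$ and $N-\{i\}\in K$ for all $i\in N$. $\Bbbk[K]=\Bbbk[v_1,\ldots,v_m]/(v_I\mid I\notin K)$, $|v_i|=2$; it is Golod if all products and (higher) Massey products in the positive-degree part of $\mathrm{Tor}_{\Bbbk[v_1,\ldots,v_m]}(\Bbbk[K],\Bbbk)$ (induced from the Koszul resolution) are trivial. With $N_1,\ldots,N_r$ the minimal non-faces, $K$ has a minimal Taylor resolution if the Taylor resolution of $\Bbbk[K]$ (free on $w_{i_1,\ldots,i_\ell}$, $d(w_{i_1,\ldots,i_\ell})=\sum_k(-1)^{k+1}v_{(N_{i_1}\cup\cdots\cup N_{i_\ell})-(N_{i_1}\cup\cdots\widehat{N_{i_k}}\cdots\cup N_{i_\ell})}w_{i_1,\ldots,\widehat{i_k},\ldots,i_\ell}$, $v_\emptyset=1$) satisfies $d\otimes\Bbbk=0$; equivalently $N_i\not\subset\bigcup_{k\ne i}N_k$ for all $i$. *)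

theory Defs
  imports Main
begin

definition simplicial_complex :: "nat \<Rightarrow> nat set set \<Rightarrow> bool" where
  "simplicial_complex m K \<longleftrightarrow>
     {} \<in> K \<and> (\<forall>\<sigma>\<in>K. \<sigma> \<subseteq> {1..m}) \<and> (\<forall>\<sigma>\<in>K. \<forall>\<tau>. \<tau> \<subseteq> \<sigma> \<longrightarrow> \<tau> \<in> K)"

definition minimal_nonface :: "nat \<Rightarrow> nat set set \<Rightarrow> nat set \<Rightarrow> bool" where
  "minimal_nonface m K N \<longleftrightarrow>
     N \<subseteq> {1..m} \<and> N \<noteq> {} \<and> N \<notin> K \<and> (\<forall>i\<in>N. N - {i} \<in> K)"

text \<open>K has a minimal Taylor resolution: the Taylor differential tensored with k vanishes,
  i.e. every coefficient monomial v_{(N_{i_1} \<union> ... \<union> N_{i_l}) - (... hat N_{i_k} ...)} has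
  non-empty index set (the empty one gives v_\<emptyset> = 1).\<close>

definition minimal_Taylor :: "nat \<Rightarrow> nat set set \<Rightarrow> bool" where
  "minimal_Taylor m K \<longleftrightarrow>
     (\<forall>I. I \<subseteq> {N. minimal_nonface m K N} \<and> I \<noteq> {} \<longrightarrow>
        (\<forall>N\<in>I. \<Union>I - \<Union>(I - {N}) \<noteq> {}))"

text \<open>Koszul complex \<Lambda>[u_1..u_m] \<otimes> k[K] (which computes Tor_{k[v]}(k[K],k) as an algebra).
  Basis elements u_J v^\<alpha> are pairs (J, \<alpha>) with J \<subseteq> [m] and supp \<alpha> \<in> K;
  u_J is the increasing exterior monomial.\<close>

definition msupp :: "(nat \<Rightarrow> nat) \<Rightarrow> nat set" where
  "msupp \<alpha> = {i. \<alpha> i \<noteq> 0}"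

definition kbasis :: "nat \<Rightarrow> nat set set \<Rightarrow> (nat set \<times> (nat \<Rightarrow> nat)) set" where
  "kbasis m K = {(J, \<alpha>). J \<subseteq> {1..m} \<and> msupp \<alpha> \<in> K}"

definition kchains :: "nat \<Rightarrow> nat set set \<Rightarrow> ((nat set \<times> (nat \<Rightarrow> nat)) \<Rightarrow> 'k::comm_ring_1) set" where
  "kchains m K = {f. finite {x. f x \<noteq> 0} \<and> {x. f x \<noteq> 0} \<subseteq> kbasis m K}"

text \<open>Sign with u_j \<and> u_{J-{j}} = ksign j J * u_J for j \<in> J.\<close>
definition ksign :: "nat \<Rightarrow> nat set \<Rightarrow> 'k::comm_ring_1" where
  "ksign j J = (-1) ^ card {i\<in>J. i < j}"

text \<open>Sign with u_{J1} u_{J2} = ssign J1 J2 * u_{J1 \<union> J2} for disjoint J1, J2.\<close>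
definition ssign :: "nat set \<Rightarrow> nat set \<Rightarrow> 'k::comm_ring_1" where
  "ssign J1 J2 = (-1) ^ card {(a, b). a \<in> J1 \<and> b \<in> J2 \<and> b < a}"

text \<open>Koszul differential d(u_j) = v_j, d(v_j) = 0, extended as a derivation.\<close>
definition kdiff :: "nat \<Rightarrow> nat set set \<Rightarrow> ((nat set \<times> (nat \<Rightarrow> nat)) \<Rightarrow> 'k::comm_ring_1)
     \<Rightarrow> ((nat set \<times> (nat \<Rightarrow> nat)) \<Rightarrow> 'k)" where
  "kdiff m K f = (\<lambda>(J, \<beta>). if (J, \<beta>) \<in> kbasis m K then
      (\<Sum>j \<in> {j\<in>{1..m}. j \<notin> J \<and> 0 < \<beta> j}.
          ksign j (insert j J) * f (insert j J, \<beta>(j := \<beta> j - 1)))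
    else 0)"

definition kmult :: "nat \<Rightarrow> nat set set \<Rightarrow> ((nat set \<times> (nat \<Rightarrow> nat)) \<Rightarrow> 'k::comm_ring_1)
     \<Rightarrow> ((nat set \<times> (nat \<Rightarrow> nat)) \<Rightarrow> 'k) \<Rightarrow> ((nat set \<times> (nat \<Rightarrow> nat)) \<Rightarrow> 'k)" where
  "kmult m K f g = (\<lambda>(J, \<gamma>). if (J, \<gamma>) \<in> kbasis m K then
      (\<Sum>J1 \<in> Pow J. \<Sum>\<alpha> \<in> {\<alpha>. \<forall>i. \<alpha> i \<le> \<gamma> i}.
          ssign J1 (J - J1) * f (J1, \<alpha>) * g (J - J1, \<lambda>i. \<gamma> i - \<alpha> i))
    else 0)"

text \<open>\<bar>a = (-1)^{|a|+1} a, extended linearly (homological degree = |J|, parity of total degree).\<close>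
definition kbar :: "((nat set \<times> (nat \<Rightarrow> nat)) \<Rightarrow> 'k::comm_ring_1) \<Rightarrow> ((nat set \<times> (nat \<Rightarrow> nat)) \<Rightarrow> 'k)" where
  "kbar f = (\<lambda>(J, \<alpha>). (-1) ^ (card J + 1) * f (J, \<alpha>))"

definition khomog :: "nat \<Rightarrow> ((nat set \<times> (nat \<Rightarrow> nat)) \<Rightarrow> 'k::comm_ring_1) \<Rightarrow> bool" where
  "khomog m f \<longleftrightarrow> (\<exists>i j. \<forall>J \<alpha>. f (J, \<alpha>) \<noteq> 0 \<longrightarrow> card J = i \<and> card J + sum \<alpha> {1..m} = j)"

text \<open>Positive degree part: no component on the unit u_\<emptyset> v^0.\<close>
definition kpos :: "((nat set \<times> (nat \<Rightarrow> nat)) \<Rightarrow> 'k::comm_ring_1) \<Rightarrow> bool" where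
  "kpos f \<longleftrightarrow> f ({}, \<lambda>_. 0) = 0"

text \<open>Golod (Golod / Gulliksen--Levin): the positive part of Tor = H(Koszul complex) admits a
  trivial Massey operation on a homogeneous generating system: all products and all higher
  Massey products vanish.\<close>
definition golod :: "'k::comm_ring_1 itself \<Rightarrow> nat \<Rightarrow> nat set set \<Rightarrow> bool" where
  "golod _ m K \<longleftrightarrow>
    (\<exists>(B :: ((nat set \<times> (nat \<Rightarrow> nat)) \<Rightarrow> 'k) set) \<mu>.
       B \<subseteq> {z \<in> kchains m K. kdiff m K z = (\<lambda>_. 0) \<and> kpos z \<and> khomog m z} \<and>
       (\<forall>z \<in> kchains m K. kdiff m K z = (\<lambda>_. 0) \<and> kpos z \<longrightarrow>
          (\<exists>F c w. finite F \<and> F \<subseteq> B \<and> w \<in> kchains m K \<and>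
             z = (\<lambda>x. (\<Sum>b\<in>F. c b * b x) + kdiff m K w x))) \<and>
       (\<forall>b\<in>B. \<mu> [b] = b) \<and>
       (\<forall>bs. set bs \<subseteq> B \<and> 2 \<le> length bs \<longrightarrow>
          \<mu> bs \<in> kchains m K \<and> kpos (\<mu> bs) \<and>
          kdiff m K (\<mu> bs) =
            (\<lambda>x. \<Sum>j\<in>{1..<length bs}. kmult m K (kbar (\<mu> (take j bs))) (\<mu> (drop j bs)) x)))"

end

theory Submission
  imports Defs
begin

text \<open>Suppose \<open>N1\<close> and \<open>N2\<close> are disjoint minimal non-faces. Minimality of the Taylor
  resolution makes every subset of \<open>N1 \<union> N2\<close> containing neither \<open>N1\<close> nor \<open>N2\<close> a face.
  For \<open>a \<in> N1\<close>, \<open>b \<in> N2\<close> the chains \<open>z1 = u\<^sub>a v\<^bsub>N1 - {a}\<^esub>\<close> and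
  \<open>z2 = u\<^sub>b v\<^bsub>N2 - {b}\<^esub>\<close> are Koszul cycles, and the linear form \<open>\<phi>\<close> reading off the
  signed coefficients of the monomials \<open>u\<^sub>a u\<^sub>b v\<^bsub>N1 \<union> N2 - {a,b}\<^esub>\<close> vanishes on
  boundaries. The pairing \<open>\<psi>(x, y) = \<phi>(kbar x \<cdot> y)\<close> satisfies \<open>\<psi>(z1, z2) = 1\<close>,
  \<open>\<psi>(x, d w) = 0\<close> for every cycle \<open>x\<close> and \<open>\<psi>(d w, z2) = 0\<close>. If the ring is Golod,
  \<open>z1\<close> and \<open>z2\<close> are combinations of homology generators modulo boundaries, and products of
  generators are boundaries, so \<open>\<psi>(z1, z2) = 0\<close>: a contradiction with \<open>0 \<noteq> 1\<close>.\<close>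

type_synonym 'k kchain = "(nat set \<times> (nat \<Rightarrow> nat)) \<Rightarrow> 'k"

definition sqfree_exp :: "nat set \<Rightarrow> nat \<Rightarrow> nat" where
  "sqfree_exp S = (\<lambda>i. if i \<in> S then 1 else 0)"

lemma msupp_sqfree_exp [simp]: "msupp (sqfree_exp S) = S"
  by (auto simp: msupp_def sqfree_exp_def)

lemma sqfree_exp_eq_iff [simp]: "sqfree_exp A = sqfree_exp B \<longleftrightarrow> A = B"
  by (metis msupp_sqfree_exp)

lemma bounded_by_sqfree_exp:
  "{\<alpha>. \<forall>i. \<alpha> i \<le> sqfree_exp S i} = sqfree_exp ` Pow S"
proof safe
  fix \<alpha> assume le: "\<forall>i. \<alpha> i \<le> sqfree_exp S i"
  then have "\<alpha> = sqfree_exp {i. \<alpha> i = 1}" and "{i. \<alpha> i = 1} \<subseteq> S"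
    by (force simp: sqfree_exp_def le_Suc_eq split: if_splits)+
  then show "\<alpha> \<in> sqfree_exp ` Pow S" by blast
qed (auto simp: sqfree_exp_def)

lemma kdiff_sqfree_exp:
  assumes "J \<subseteq> {1..m}" "S \<subseteq> {1..m}" "J \<inter> S = {}"
  shows "kdiff m K f (J, sqfree_exp S) = (if S \<in> K then
     (\<Sum>j\<in>S. ksign j (insert j J) * f (insert j J, sqfree_exp (S - {j}))) else 0)"
proof -
  have "{j\<in>{1..m}. j \<notin> J \<and> 0 < sqfree_exp S j} = S"
    using assms by (auto simp: sqfree_exp_def)
  moreover have "(sqfree_exp S)(j := sqfree_exp S j - 1) = sqfree_exp (S - {j})" if "j \<in> S" for j
    using that by (auto simp: sqfree_exp_def)
  ultimately show ?thesis
    using assms(1) by (auto simp: kdiff_def kbasis_def intro!: sum.cong)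
qed

lemma kmult_sqfree_exp:
  assumes "J \<subseteq> {1..m}" "S \<in> K" "finite S" "finite J" "J \<inter> S = {}"
  shows "kmult m K f g (J, sqfree_exp S) = (\<Sum>A\<in>Pow (J \<union> S).
      ssign (A \<inter> J) (J - A) * f (A \<inter> J, sqfree_exp (A - J)) * g (J - A, sqfree_exp (S - A)))"
proof -
  have diff: "(\<lambda>i. sqfree_exp S i - sqfree_exp T i) = sqfree_exp (S - T)" if "T \<subseteq> S" for T
    using that by (auto simp: sqfree_exp_def)
  have "inj_on sqfree_exp (Pow S)" by (auto simp: inj_on_def)
  then have "kmult m K f g (J, sqfree_exp S) = (\<Sum>J1\<in>Pow J. \<Sum>T\<in>Pow S.
      ssign J1 (J - J1) * f (J1, sqfree_exp T) * g (J - J1, sqfree_exp (S - T)))"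
    using assms by (simp add: kmult_def kbasis_def bounded_by_sqfree_exp sum.reindex diff)
  also have "\<dots> = (\<Sum>(J1, T)\<in>Pow J \<times> Pow S.
      ssign J1 (J - J1) * f (J1, sqfree_exp T) * g (J - J1, sqfree_exp (S - T)))"
    by (simp add: sum.cartesian_product)
  also have "\<dots> = (\<Sum>A\<in>Pow (J \<union> S).
      ssign (A \<inter> J) (J - A) * f (A \<inter> J, sqfree_exp (A - J)) * g (J - A, sqfree_exp (S - A)))"
  proof (rule sum.reindex_bij_witness[of _ "\<lambda>A. (A \<inter> J, A - J)" "\<lambda>(J1, T). J1 \<union> T"],
      goal_cases)
    case (5 JT)
    then obtain J1 T where "JT = (J1, T)" "J1 \<subseteq> J" "T \<subseteq> S" by blast
    moreover from this have "(J1 \<union> T) \<inter> J = J1" "J - (J1 \<union> T) = J - J1"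
        "J1 \<union> T - J = T" "S - (J1 \<union> T) = S - T"
      using assms(5) by auto
    ultimately show ?case by simp
  qed (use assms(5) in auto)
  finally show ?thesis .
qed


definition pair_sign :: "nat \<Rightarrow> nat \<Rightarrow> 'k::comm_ring_1" where
  "pair_sign a b = (if b < a then -1 else 1)"

lemma pair_sign_swap: "a \<noteq> b \<Longrightarrow> pair_sign b a = - pair_sign a b"
  by (auto simp: pair_sign_def)

lemma pair_sign_square [simp]: "pair_sign a b * pair_sign a b = 1"
  by (simp add: pair_sign_def)

lemma ssign_empty_left [simp]: "ssign {} J = 1"
  and ssign_empty_right [simp]: "ssign J {} = 1"
  by (simp_all add: ssign_def)

lemma ssign_singletons: "ssign {a} {b} = pair_sign a b"
proof -
  have "{(x, y). x \<in> {a} \<and> y \<in> {b} \<and> y < x} = (if b < a then {(a, b)} else {})" by auto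
  then show ?thesis by (simp add: ssign_def pair_sign_def)
qed

lemma ksign_singleton [simp]: "ksign j {j} = 1"
proof -
  have none_below: "{i\<in>{j}. i < j} = {}" by auto
  show ?thesis unfolding ksign_def none_below by simp
qed

lemma ksign_pair: "j \<noteq> b \<Longrightarrow> ksign j {j, b} = pair_sign j b"
proof -
  have "{i\<in>{j, b}. i < j} = (if b < j then {b} else {})" by auto
  then show ?thesis by (simp add: ksign_def pair_sign_def)
qed

lemma ksign_triple:
  assumes "a \<noteq> b"
  shows "ksign j {j, a, b} =
    ((-1) ^ ((if a < j then 1 else 0) + (if b < j then 1 else 0)) :: 'k::comm_ring_1)"
proof -
  have "{i\<in>{j, a, b}. i < j} = (if a < j then {a} else {}) \<union> (if b < j then {b} else {})"
    by auto
  then show ?thesis using assms by (simp add: ksign_def)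
qed

lemma pair_sign_ksign_exchange_left:
  "distinct [a, b, j] \<Longrightarrow>
    pair_sign a b * ksign j {j, a, b} = - (pair_sign j b * ksign a {a, j, b} :: 'k::comm_ring_1)"
  by (simp add: ksign_triple pair_sign_def)

lemma pair_sign_ksign_exchange_right:
  "distinct [a, b, j] \<Longrightarrow>
    pair_sign a b * ksign j {j, a, b} = - (pair_sign a j * ksign b {b, a, j} :: 'k::comm_ring_1)"
  by (simp add: ksign_triple pair_sign_def)

lemma sum_offdiag_antisym_eq_0:
  fixes F :: "nat \<Rightarrow> nat \<Rightarrow> 'k::comm_ring_1"
  assumes "finite A" and antisym: "\<And>a j. a \<in> A \<Longrightarrow> j \<in> A \<Longrightarrow> a \<noteq> j \<Longrightarrow> F a j = - F j a"
  shows "(\<Sum>a\<in>A. \<Sum>j\<in>A - {a}. F a j) = 0"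
proof -
  have "A - {a} = {j\<in>A. j < a} \<union> {j\<in>A. a < j}" for a by auto
  then have "(\<Sum>a\<in>A. \<Sum>j\<in>A - {a}. F a j)
      = (\<Sum>a\<in>A. (\<Sum>j\<in>{j\<in>A. j < a}. F a j) + (\<Sum>j\<in>{j\<in>A. a < j}. F a j))"
    using assms(1) by (auto intro!: sum.cong sum.union_disjoint)
  also have "\<dots> = (\<Sum>a\<in>A. \<Sum>j\<in>{j\<in>A. j < a}. F a j) + (\<Sum>a\<in>A. \<Sum>j\<in>{j\<in>A. a < j}. F a j)"
    by (rule sum.distrib)
  also have "(\<Sum>a\<in>A. \<Sum>j\<in>{j\<in>A. a < j}. F a j) = (\<Sum>j\<in>A. \<Sum>a\<in>{a\<in>A. a < j}. F a j)"
    by (rule sum.swap_restrict[OF assms(1) assms(1)])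
  also have "\<dots> = (\<Sum>j\<in>A. \<Sum>a\<in>{a\<in>A. a < j}. - F j a)"
    by (intro sum.cong refl antisym) auto
  finally show ?thesis by (simp add: sum_negf)
qed

lemma sum_sum_if_conj:
  assumes "finite P" "finite Q"
  shows "(\<Sum>a\<in>P. \<Sum>b\<in>Q. if a \<in> U \<and> b \<in> V then X a b else 0) = (\<Sum>a\<in>U\<inter>P. \<Sum>b\<in>V\<inter>Q. X a b)"
proof -
  have "(\<Sum>a\<in>U\<inter>P. \<Sum>b\<in>V\<inter>Q. X a b)
      = (\<Sum>a\<in>P. if a \<in> U then (\<Sum>b\<in>Q. if b \<in> V then X a b else 0) else 0)"
    using assms by (simp add: Int_commute sum.inter_restrict)
  also have "\<dots> = (\<Sum>a\<in>P. \<Sum>b\<in>Q. if a \<in> U \<and> b \<in> V then X a b else 0)"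
    by (intro sum.cong refl) auto
  finally show ?thesis by simp
qed

definition coeff0 :: "nat set \<Rightarrow> 'k::comm_ring_1 kchain \<Rightarrow> 'k" where
  "coeff0 A f = f ({}, sqfree_exp A)"

definition coeff1 :: "nat set \<Rightarrow> nat set \<Rightarrow> 'k::comm_ring_1 kchain \<Rightarrow> 'k" where
  "coeff1 P A f = (\<Sum>a\<in>A \<inter> P. f ({a}, sqfree_exp (A - {a})))"

text \<open>As \<open>u\<^sub>a u\<^sub>b = pair_sign a b * u\<^bsub>{a,b}\<^esub>\<close>, \<open>coeff2 P Q A f\<close> sums the coefficients
  of the monomials \<open>u\<^sub>a u\<^sub>b v\<^bsub>A - {a,b}\<^esub>\<close> in \<open>f\<close> over \<open>a \<in> P\<close>, \<open>b \<in> Q\<close>.\<close>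

definition coeff2 :: "nat set \<Rightarrow> nat set \<Rightarrow> nat set \<Rightarrow> 'k::comm_ring_1 kchain \<Rightarrow> 'k" where
  "coeff2 P Q A f =
    (\<Sum>a\<in>A \<inter> P. \<Sum>b\<in>A \<inter> Q. pair_sign a b * f ({a, b}, sqfree_exp (A - {a, b})))"

lemma coeff0_add: "coeff0 A (\<lambda>x. f x + g x) = coeff0 A f + coeff0 A g"
  and coeff0_smult: "coeff0 A (\<lambda>x. c * f x) = c * coeff0 A f"
  by (simp_all add: coeff0_def)

lemma coeff1_add: "coeff1 P A (\<lambda>x. f x + g x) = coeff1 P A f + coeff1 P A g"
  and coeff1_smult: "coeff1 P A (\<lambda>x. c * f x) = c * coeff1 P A f"
  by (simp_all add: coeff1_def sum.distrib sum_distrib_left)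

lemma coeff2_add: "coeff2 P Q A (\<lambda>x. f x + g x) = coeff2 P Q A f + coeff2 P Q A g"
  and coeff2_smult: "coeff2 P Q A (\<lambda>x. c * f x) = c * coeff2 P Q A f"
  by (simp_all add: coeff2_def sum.distrib distrib_left sum_distrib_left mult.left_commute)

lemma coeff2_swap:
  assumes "P \<inter> Q = {}"
  shows "coeff2 Q P A f = - coeff2 P Q A f"
proof -
  have "coeff2 Q P A f = (\<Sum>a\<in>A \<inter> P. \<Sum>b\<in>A \<inter> Q. pair_sign b a * f ({a, b}, sqfree_exp (A - {a, b})))"
    unfolding coeff2_def by (subst sum.swap) (simp add: insert_commute)
  also have "\<dots> = - coeff2 P Q A f"
    unfolding coeff2_def sum_negf[symmetric]
  proof (intro sum.cong refl)
    fix a b assume "a \<in> A \<inter> P" "b \<in> A \<inter> Q"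
    with assms have "a \<noteq> b" by auto
    then show "pair_sign b a * f ({a, b}, sqfree_exp (A - {a, b}))
        = - (pair_sign a b * f ({a, b}, sqfree_exp (A - {a, b})))"
      by (simp add: pair_sign_swap[of a b])
  qed
  finally show ?thesis .
qed

lemma coeff0_empty_kdiff: "coeff0 {} (kdiff m K w) = 0"
  by (simp add: coeff0_def kdiff_def sqfree_exp_def)

text \<open>The summand of \<open>kmult_sqfree_exp\<close> indexed by \<open>A\<close> at \<open>u\<^sub>a u\<^sub>b v\<^bsub>N - {a,b}\<^esub>\<close>:
  both letters \<open>a\<close>, \<open>b\<close> go to \<open>f\<close>, both go to \<open>g\<close>, or one goes to each factor.\<close>

lemma kmult_pair_summand:
  fixes f g :: "'k::comm_ring_1 kchain"
  assumes "a \<noteq> b" "a \<in> N" "b \<in> N"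
  shows "pair_sign a b * (ssign (A \<inter> {a, b}) ({a, b} - A)
      * kbar f (A \<inter> {a, b}, sqfree_exp (A - {a, b})) * g ({a, b} - A, sqfree_exp (N - {a, b} - A)))
    = (if a \<in> A \<and> b \<in> A
        then - (pair_sign a b * f ({a, b}, sqfree_exp (A - {a, b}))) * coeff0 (N - A) g else 0)
    + (if a \<in> N - A \<and> b \<in> N - A
        then - coeff0 A f * (pair_sign a b * g ({a, b}, sqfree_exp (N - A - {a, b}))) else 0)
    + (if a \<in> A \<and> b \<in> N - A
        then f ({a}, sqfree_exp (A - {a})) * g ({b}, sqfree_exp (N - A - {b})) else 0)
    - (if b \<in> A \<and> a \<in> N - A
        then f ({b}, sqfree_exp (A - {b})) * g ({a}, sqfree_exp (N - A - {a})) else 0)"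
proof -
  have kbar_pair: "kbar f ({a, b}, \<alpha>) = - f ({a, b}, \<alpha>)" for \<alpha>
    using assms(1) by (simp add: kbar_def)
  consider "a \<in> A" "b \<in> A" | "a \<in> A" "b \<notin> A" | "a \<notin> A" "b \<in> A" | "a \<notin> A" "b \<notin> A"
    by blast
  then show ?thesis
  proof cases
    case 1
    then have "A \<inter> {a, b} = {a, b}" "{a, b} - A = {}" "N - {a, b} - A = N - A" by auto
    with 1 show ?thesis by (simp add: kbar_pair coeff0_def)
  next
    case 2
    then have "A \<inter> {a, b} = {a}" "{a, b} - A = {b}" "A - {a, b} = A - {a}"
      "N - {a, b} - A = N - A - {b}" by auto
    with 2 assms show ?thesis by (simp add: kbar_def ssign_singletons flip: mult.assoc)
  next
    case 3
    then have "A \<inter> {a, b} = {b}" "{a, b} - A = {a}" "A - {a, b} = A - {b}"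
      "N - {a, b} - A = N - A - {a}" by auto
    with 3 assms show ?thesis
      by (simp add: kbar_def ssign_singletons pair_sign_swap[OF assms(1)] flip: mult.assoc)
  next
    case 4
    then have "A \<inter> {a, b} = {}" "{a, b} - A = {a, b}" "A - {a, b} = A"
      "N - {a, b} - A = N - A - {a, b}" by auto
    with 4 assms show ?thesis by (simp add: kbar_def coeff0_def)
  qed
qed

definition pairing :: "nat \<Rightarrow> nat set set \<Rightarrow> nat set \<Rightarrow> nat set \<Rightarrow>
    'k::comm_ring_1 kchain \<Rightarrow> 'k kchain \<Rightarrow> 'k" where
  "pairing m K P Q f g = coeff2 P Q (P \<union> Q) (kmult m K (kbar f) g)"

definition nonface_cycle :: "nat set \<Rightarrow> nat \<Rightarrow> 'k::comm_ring_1 kchain" where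
  "nonface_cycle P c = (\<lambda>x. if x = ({c}, sqfree_exp (P - {c})) then 1 else 0)"

lemma nonface_cycle_in_kchains:
  assumes "minimal_nonface m K P" "c \<in> P"
  shows "nonface_cycle P c \<in> kchains m K"
proof -
  have support: "{x. nonface_cycle P c x \<noteq> 0} = {({c}, sqfree_exp (P - {c}))}"
    by (auto simp: nonface_cycle_def)
  have "({c}, sqfree_exp (P - {c})) \<in> kbasis m K"
    using assms by (auto simp: kbasis_def minimal_nonface_def)
  then show ?thesis unfolding kchains_def mem_Collect_eq support by simp
qed

lemma kpos_nonface_cycle: "kpos (nonface_cycle P c)"
  by (simp add: kpos_def nonface_cycle_def)

lemma kdiff_nonface_cycle:
  assumes "P \<notin> K" "c \<in> P"
  shows "kdiff m K (nonface_cycle P c) = (\<lambda>_. 0)"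
proof -
  have no_hit: "(insert j J, \<beta>(j := \<beta> j - 1)) \<noteq> ({c}, sqfree_exp (P - {c}))"
    if "0 < \<beta> j" "msupp \<beta> \<in> K" for j J \<beta>
  proof
    assume eq: "(insert j J, \<beta>(j := \<beta> j - 1)) = ({c}, sqfree_exp (P - {c}))"
    then have "j = c" by auto
    with eq have "\<beta> i = sqfree_exp (P - {c}) i" if "i \<noteq> c" for i
      using that by (metis fun_upd_other prod.inject)
    with \<open>j = c\<close> \<open>0 < \<beta> j\<close> assms(2) have "\<beta> i \<noteq> 0 \<longleftrightarrow> i \<in> P" for i
      by (cases "i = c") (auto simp: sqfree_exp_def)
    then have "msupp \<beta> = P" by (auto simp: msupp_def)
    with that(2) assms(1) show False by simp
  qed
  show ?thesis
  proof
    fix x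
    show "kdiff m K (nonface_cycle P c) x = 0"
      using no_hit
      by (cases x) (auto simp: kdiff_def kbasis_def nonface_cycle_def intro!: sum.neutral)
  qed
qed

lemma coeff0_nonface_cycle: "coeff0 A (nonface_cycle P c) = 0"
  by (simp add: coeff0_def nonface_cycle_def)

lemma coeff1_nonface_cycle:
  assumes "finite P" "c \<in> P"
  shows "coeff1 Q A (nonface_cycle P c) = (if A = P \<and> c \<in> Q then 1 else 0)"
proof -
  have "({a}, sqfree_exp (A - {a})) = ({c}, sqfree_exp (P - {c})) \<longleftrightarrow> a = c \<and> A = P"
    if "a \<in> A" for a
    using that assms(2) by auto
  then have "coeff1 Q A (nonface_cycle P c) = (\<Sum>a\<in>A \<inter> Q. if a = c \<and> A = P then 1 else 0)"
    by (auto simp: coeff1_def nonface_cycle_def intro!: sum.cong)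
  also have "\<dots> = (if A = P \<and> c \<in> Q then 1 else 0)"
    using assms by (cases "A = P") simp_all
  finally show ?thesis .
qed

lemma coeff2_nonface_cycle:
  assumes "P \<inter> Q = {}"
  shows "coeff2 P Q A (nonface_cycle R c) = 0"
  using assms by (auto simp: coeff2_def nonface_cycle_def intro!: sum.neutral)

lemma obtain_minimal_nonface:
  assumes "simplicial_complex m K" "S \<subseteq> {1..m}" "S \<notin> K"
  obtains T where "T \<subseteq> S" "minimal_nonface m K T"
proof -
  have "finite S" using assms(2) finite_subset by blast
  then have "\<exists>T\<subseteq>S. T \<notin> K \<and> (\<forall>i\<in>T. T - {i} \<in> K)"
    using assms(3)
  proof (induction S rule: finite_psubset_induct)
    case (psubset S)
    show ?case
    proof (cases "\<forall>i\<in>S. S - {i} \<in> K")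
      case True
      with psubset.prems show ?thesis by blast
    next
      case False
      then obtain i where "i \<in> S" "S - {i} \<notin> K" by blast
      then have "\<exists>T\<subseteq>S - {i}. T \<notin> K \<and> (\<forall>i\<in>T. T - {i} \<in> K)"
        by (intro psubset.IH) auto
      then show ?thesis by blast
    qed
  qed
  then obtain T where "T \<subseteq> S" "T \<notin> K" "\<forall>i\<in>T. T - {i} \<in> K" by blast
  moreover have "T \<noteq> {}" using \<open>T \<notin> K\<close> assms(1) by (auto simp: simplicial_complex_def)
  ultimately show thesis using assms(2) by (intro that) (auto simp: minimal_nonface_def)
qed

lemma golod_products_are_boundaries:
  assumes "golod TYPE('k) m K"
  obtains B :: "'k::comm_ring_1 kchain set" where
    "\<And>b. b \<in> B \<Longrightarrow> kdiff m K b = (\<lambda>_. 0)"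
    "\<And>z. z \<in> kchains m K \<Longrightarrow> kdiff m K z = (\<lambda>_. 0) \<Longrightarrow> kpos z \<Longrightarrow>
       \<exists>F c w. finite F \<and> F \<subseteq> B \<and> z = (\<lambda>x. (\<Sum>b\<in>F. c b * b x) + kdiff m K w x)"
    "\<And>b b'. b \<in> B \<Longrightarrow> b' \<in> B \<Longrightarrow> \<exists>w. kmult m K (kbar b) b' = kdiff m K w"
proof -
  from assms obtain B :: "'k kchain set" and \<mu> where
    cycles: "B \<subseteq> {z \<in> kchains m K. kdiff m K z = (\<lambda>_. 0) \<and> kpos z \<and> khomog m z}"
    and generate: "\<forall>z \<in> kchains m K. kdiff m K z = (\<lambda>_. 0) \<and> kpos z \<longrightarrow>
          (\<exists>F c w. finite F \<and> F \<subseteq> B \<and> w \<in> kchains m K \<and>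
             z = (\<lambda>x. (\<Sum>b\<in>F. c b * b x) + kdiff m K w x))"
    and massey1: "\<forall>b\<in>B. \<mu> [b] = b"
    and massey: "\<forall>bs. set bs \<subseteq> B \<and> 2 \<le> length bs \<longrightarrow>
          \<mu> bs \<in> kchains m K \<and> kpos (\<mu> bs) \<and> kdiff m K (\<mu> bs) =
            (\<lambda>x. \<Sum>j\<in>{1..<length bs}. kmult m K (kbar (\<mu> (take j bs))) (\<mu> (drop j bs)) x)"
    unfolding golod_def by (elim exE conjE) (rule that; assumption)
  show thesis
  proof (rule that)
    show "kdiff m K b = (\<lambda>_. 0)" if "b \<in> B" for b
      using cycles that by blast
    show "\<exists>F c w. finite F \<and> F \<subseteq> B \<and> z = (\<lambda>x. (\<Sum>b\<in>F. c b * b x) + kdiff m K w x)"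
      if "z \<in> kchains m K" "kdiff m K z = (\<lambda>_. 0)" "kpos z" for z
      using generate that by blast
    show "\<exists>w. kmult m K (kbar b) b' = kdiff m K w" if "b \<in> B" "b' \<in> B" for b b'
    proof
      show "kmult m K (kbar b) b' = kdiff m K (\<mu> [b, b'])"
        using massey[rule_format, of "[b, b']"] massey1 that by simp
    qed
  qed
qed

lemma additive_homogeneous_sum:
  fixes L :: "('a \<Rightarrow> 'k::comm_ring_1) \<Rightarrow> 'k"
  assumes add: "\<And>f g. L (\<lambda>x. f x + g x) = L f + L g"
    and smult: "\<And>c f. L (\<lambda>x. c * f x) = c * L f"
    and "finite F"
  shows "L (\<lambda>x. \<Sum>b\<in>F. c b * v b x) = (\<Sum>b\<in>F. c b * L (v b))"
  using \<open>finite F\<close>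
proof (induction F rule: finite_induct)
  case empty
  from smult[of 0 "\<lambda>_. 0"] show ?case by simp
next
  case (insert b F)
  then show ?case by (simp add: add smult)
qed

locale disjoint_minimal_nonfaces =
  fixes m :: nat and K :: "nat set set" and N1 N2 :: "nat set"
  assumes complex: "simplicial_complex m K"
    and taylor: "minimal_Taylor m K"
    and nonface1: "minimal_nonface m K N1"
    and nonface2: "minimal_nonface m K N2"
    and disjoint: "N1 \<inter> N2 = {}"
begin

abbreviation N12 :: "nat set" where "N12 \<equiv> N1 \<union> N2"

lemma N12_subset: "N12 \<subseteq> {1..m}"
  using nonface1 nonface2 by (auto simp: minimal_nonface_def)

lemma finite_N1 [simp]: "finite N1" and finite_N2 [simp]: "finite N2"
  using N12_subset finite_subset by auto

lemma finite_if_subset_N12: "C \<subseteq> N12 \<Longrightarrow> finite C"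
  by (meson finite_N1 finite_N2 finite_Un finite_subset)

lemma N1_nonempty: "N1 \<noteq> {}" and N2_nonempty: "N2 \<noteq> {}"
  and N1_notin: "N1 \<notin> K" and N2_notin: "N2 \<notin> K"
  using nonface1 nonface2 by (auto simp: minimal_nonface_def)

text \<open>A minimal non-face inside \<open>S\<close> would be covered by \<open>N1 \<union> N2\<close>, which minimality of the
  Taylor resolution forbids.\<close>

lemma face_of_subset:
  assumes "S \<subseteq> N12" "\<not> N1 \<subseteq> S" "\<not> N2 \<subseteq> S"
  shows "S \<in> K"
proof (rule ccontr)
  assume "S \<notin> K"
  with assms(1) N12_subset obtain T where T: "T \<subseteq> S" "minimal_nonface m K T"
    by (meson complex obtain_minimal_nonface order_trans)
  let ?I = "{N1, N2, T}"
  have "?I \<subseteq> {N. minimal_nonface m K N}" using T(2) nonface1 nonface2 by blast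
  then have "\<Union>?I - \<Union>(?I - {T}) \<noteq> {}"
    using taylor unfolding minimal_Taylor_def by blast
  moreover have "?I - {T} = {N1, N2}" using T(1) assms(2,3) by auto
  ultimately show False using T(1) assms(1) by auto
qed

lemma kdiff_face:
  assumes "J \<subseteq> N12" "S \<subseteq> N12" "J \<inter> S = {}" "S \<in> K"
  shows "kdiff m K f (J, sqfree_exp S) =
    (\<Sum>j\<in>S. ksign j (insert j J) * f (insert j J, sqfree_exp (S - {j})))"
proof -
  have "J \<subseteq> {1..m}" "S \<subseteq> {1..m}" using assms(1,2) N12_subset by auto
  then show ?thesis using assms(3,4) by (simp add: kdiff_sqfree_exp)
qed

lemma coeff1_N12_sum:
  assumes "C \<subseteq> N12"
  shows "coeff1 N1 C f + coeff1 N2 C f = (\<Sum>e\<in>C. f ({e}, sqfree_exp (C - {e})))"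
proof -
  have "finite C" using assms by (rule finite_if_subset_N12)
  then have "(\<Sum>e\<in>C \<inter> N1 \<union> C \<inter> N2. f ({e}, sqfree_exp (C - {e})))
      = coeff1 N1 C f + coeff1 N2 C f"
    unfolding coeff1_def using disjoint by (intro sum.union_disjoint) auto
  moreover have "C \<inter> N1 \<union> C \<inter> N2 = C" using assms by auto
  ultimately show ?thesis by simp
qed

lemma coeff1_cycle_sum_eq_0:
  assumes "kdiff m K x = (\<lambda>_. 0)" "A \<subseteq> N12" "A \<in> K"
  shows "coeff1 N1 A x + coeff1 N2 A x = 0"
proof -
  have "0 = kdiff m K x ({}, sqfree_exp A)" using assms(1) by simp
  also have "\<dots> = coeff1 N1 A x + coeff1 N2 A x"
    using assms(2,3) by (simp add: kdiff_face coeff1_N12_sum)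
  finally show ?thesis by simp
qed

lemma coeff1_boundary_sum_eq_0:
  assumes "C \<subseteq> N12" "\<And>e. e \<in> C \<Longrightarrow> C - {e} \<in> K"
  shows "coeff1 N1 C (kdiff m K w) + coeff1 N2 C (kdiff m K w) = 0"
proof -
  define G where "G e j = ksign j {j, e} * w ({j, e}, sqfree_exp (C - {e} - {j}))" for e j
  have "coeff1 N1 C (kdiff m K w) + coeff1 N2 C (kdiff m K w) = (\<Sum>e\<in>C. \<Sum>j\<in>C - {e}. G e j)"
    unfolding coeff1_N12_sum[OF assms(1)] G_def using assms
    by (intro sum.cong refl, subst kdiff_face) auto
  also have "\<dots> = 0"
  proof (rule sum_offdiag_antisym_eq_0)
    show "finite C" using assms(1) by (rule finite_if_subset_N12)
    fix e j :: nat assume "e \<noteq> j"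
    then have "j \<noteq> e" by blast
    have sets: "{e, j} = {j, e}" "C - {j} - {e} = C - {e} - {j}" by auto
    show "G e j = - G j e"
      unfolding G_def ksign_pair[OF \<open>e \<noteq> j\<close>] ksign_pair[OF \<open>j \<noteq> e\<close>]
      using sets by (simp add: pair_sign_swap[OF \<open>j \<noteq> e\<close>])
  qed
  finally show ?thesis .
qed

lemma coeff1_boundary_eq_0:
  assumes "C \<subseteq> N1 \<or> C \<subseteq> N2"
  shows "coeff1 N1 C (kdiff m K w) = 0" and "coeff1 N2 C (kdiff m K w) = 0"
proof -
  have "C - {e} \<in> K" if "e \<in> C" for e
    using assms that N1_nonempty N2_nonempty disjoint by (intro face_of_subset) auto
  then have "coeff1 N1 C (kdiff m K w) + coeff1 N2 C (kdiff m K w) = 0"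
    using assms by (intro coeff1_boundary_sum_eq_0) auto
  moreover have "C \<inter> N2 = {} \<or> C \<inter> N1 = {}" using assms disjoint by auto
  ultimately show "coeff1 N1 C (kdiff m K w) = 0" "coeff1 N2 C (kdiff m K w) = 0"
    by (auto simp: coeff1_def)
qed

lemma coeff2_boundary_eq_0:
  assumes "M \<subseteq> N12"
  shows "coeff2 N1 N2 M (kdiff m K w) = 0"
proof -
  define F where "F a b j =
    pair_sign a b * ksign j {j, a, b} * w ({j, a, b}, sqfree_exp (M - {a, b} - {j}))" for a b j
  have "finite M" using assms by (rule finite_if_subset_N12)
  have expand: "pair_sign a b * kdiff m K w ({a, b}, sqfree_exp (M - {a, b}))
      = (\<Sum>j\<in>M \<inter> N1 - {a}. F a b j) + (\<Sum>j\<in>M \<inter> N2 - {b}. F a b j)"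
    if a: "a \<in> M \<inter> N1" and b: "b \<in> M \<inter> N2" for a b
  proof -
    have "M - {a, b} \<in> K" using a b assms by (intro face_of_subset) auto
    then have "kdiff m K w ({a, b}, sqfree_exp (M - {a, b})) = (\<Sum>j\<in>M - {a, b}.
        ksign j {j, a, b} * w ({j, a, b}, sqfree_exp (M - {a, b} - {j})))"
      using a b assms by (subst kdiff_face) auto
    then have "pair_sign a b * kdiff m K w ({a, b}, sqfree_exp (M - {a, b}))
        = (\<Sum>j\<in>M - {a, b}. F a b j)"
      by (simp add: F_def sum_distrib_left mult.assoc)
    also have "\<dots> = (\<Sum>j\<in>(M \<inter> N1 - {a}) \<union> (M \<inter> N2 - {b}). F a b j)"
      using a b assms disjoint by (intro sum.cong) auto
    also have "\<dots> = (\<Sum>j\<in>M \<inter> N1 - {a}. F a b j) + (\<Sum>j\<in>M \<inter> N2 - {b}. F a b j)"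
      by (rule sum.union_disjoint) (use \<open>finite M\<close> disjoint in auto)
    finally show ?thesis .
  qed
  have "coeff2 N1 N2 M (kdiff m K w)
      = (\<Sum>b\<in>M \<inter> N2. \<Sum>a\<in>M \<inter> N1. \<Sum>j\<in>M \<inter> N1 - {a}. F a b j)
      + (\<Sum>a\<in>M \<inter> N1. \<Sum>b\<in>M \<inter> N2. \<Sum>j\<in>M \<inter> N2 - {b}. F a b j)"
    unfolding coeff2_def using expand by (simp add: sum.distrib sum.swap[of _ "M \<inter> N1"])
  also have "(\<Sum>b\<in>M \<inter> N2. \<Sum>a\<in>M \<inter> N1. \<Sum>j\<in>M \<inter> N1 - {a}. F a b j) = 0"
  proof (rule sum.neutral, rule ballI)
    fix b assume "b \<in> M \<inter> N2"
    show "(\<Sum>a\<in>M \<inter> N1. \<Sum>j\<in>M \<inter> N1 - {a}. F a b j) = 0"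
    proof (rule sum_offdiag_antisym_eq_0)
      show "finite (M \<inter> N1)" using \<open>finite M\<close> by simp
      fix a j assume "a \<in> M \<inter> N1" "j \<in> M \<inter> N1" "a \<noteq> j"
      with \<open>b \<in> M \<inter> N2\<close> disjoint have "distinct [a, b, j]" by auto
      have sets: "{j, a, b} = {a, j, b}" "M - {a, b} - {j} = M - {j, b} - {a}" by auto
      from pair_sign_ksign_exchange_left[OF \<open>distinct [a, b, j]\<close>]
      have sign: "pair_sign a b * ksign j {a, j, b} = - (pair_sign j b * ksign a {a, j, b})"
        by (simp only: sets)
      show "F a b j = - F j b a" unfolding F_def sets sign by simp
    qed
  qed
  also have "(\<Sum>a\<in>M \<inter> N1. \<Sum>b\<in>M \<inter> N2. \<Sum>j\<in>M \<inter> N2 - {b}. F a b j) = 0"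
  proof (rule sum.neutral, rule ballI)
    fix a assume "a \<in> M \<inter> N1"
    show "(\<Sum>b\<in>M \<inter> N2. \<Sum>j\<in>M \<inter> N2 - {b}. F a b j) = 0"
    proof (rule sum_offdiag_antisym_eq_0)
      show "finite (M \<inter> N2)" using \<open>finite M\<close> by simp
      fix b j assume "b \<in> M \<inter> N2" "j \<in> M \<inter> N2" "b \<noteq> j"
      with \<open>a \<in> M \<inter> N1\<close> disjoint have "distinct [a, b, j]" by auto
      have sets: "{j, a, b} = {b, a, j}" "M - {a, b} - {j} = M - {a, j} - {b}" by auto
      from pair_sign_ksign_exchange_right[OF \<open>distinct [a, b, j]\<close>]
      have sign: "pair_sign a b * ksign j {b, a, j} = - (pair_sign a j * ksign b {b, a, j})"
        by (simp only: sets)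
      show "F a b j = - F a j b" unfolding F_def sets sign by simp
    qed
  qed
  finally show ?thesis by simp
qed

lemma coeff2_cycle_eq_0_if_not_supset:
  assumes cycle: "kdiff m K x = (\<lambda>_. 0)" and "A \<subseteq> N12"
    and PQ: "(P = N1 \<and> Q = N2) \<or> (P = N2 \<and> Q = N1)" and "\<not> Q \<subseteq> A"
  shows "coeff2 P Q A x = 0"
proof -
  define G where "G b j = pair_sign j b * x ({j, b}, sqfree_exp (A - {b} - {j}))" for b j
  have "finite A" using assms(2) by (rule finite_if_subset_N12)
  have "0 = (\<Sum>b\<in>A \<inter> P. kdiff m K x ({b}, sqfree_exp (A - {b})))" using cycle by simp
  also have "\<dots> = (\<Sum>b\<in>A \<inter> P. \<Sum>j\<in>A - {b}. G b j)"
  proof (intro sum.cong refl)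
    fix b assume b: "b \<in> A \<inter> P"
    then have "A - {b} \<in> K" using assms(2-4) by (intro face_of_subset) auto
    then have "kdiff m K x ({b}, sqfree_exp (A - {b})) = (\<Sum>j\<in>A - {b}.
        ksign j {j, b} * x ({j, b}, sqfree_exp (A - {b} - {j})))"
      using b assms(2) by (subst kdiff_face) auto
    also have "\<dots> = (\<Sum>j\<in>A - {b}. G b j)"
      unfolding G_def by (intro sum.cong refl) (simp add: ksign_pair)
    finally show "kdiff m K x ({b}, sqfree_exp (A - {b})) = (\<Sum>j\<in>A - {b}. G b j)" .
  qed
  also have "\<dots> = (\<Sum>b\<in>A \<inter> P. \<Sum>j\<in>A \<inter> P - {b}. G b j) + (\<Sum>b\<in>A \<inter> P. \<Sum>j\<in>A \<inter> Q. G b j)"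
  proof -
    have "A - {b} = (A \<inter> P - {b}) \<union> (A \<inter> Q)" if "b \<in> A \<inter> P" for b
      using that assms(2) PQ disjoint by auto
    moreover have "(A \<inter> P - {b}) \<inter> (A \<inter> Q) = {}" for b using PQ disjoint by auto
    ultimately have "(\<Sum>j\<in>A - {b}. G b j) = (\<Sum>j\<in>A \<inter> P - {b}. G b j) + (\<Sum>j\<in>A \<inter> Q. G b j)"
      if "b \<in> A \<inter> P" for b
      using that \<open>finite A\<close> by (simp add: sum.union_disjoint)
    then show ?thesis by (simp add: sum.distrib)
  qed
  also have "(\<Sum>b\<in>A \<inter> P. \<Sum>j\<in>A \<inter> P - {b}. G b j) = 0"
  proof (rule sum_offdiag_antisym_eq_0)
    show "finite (A \<inter> P)" using \<open>finite A\<close> by simp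
    fix b j :: nat assume "b \<noteq> j"
    moreover have "{j, b} = {b, j}" "A - {b} - {j} = A - {j} - {b}" by auto
    ultimately show "G b j = - G j b" by (simp add: G_def pair_sign_swap[of b j])
  qed
  also have "(\<Sum>b\<in>A \<inter> P. \<Sum>j\<in>A \<inter> Q. G b j) = - coeff2 P Q A x"
    unfolding coeff2_def sum_negf[symmetric]
  proof (intro sum.cong refl)
    fix b j assume "b \<in> A \<inter> P" "j \<in> A \<inter> Q"
    with PQ disjoint have "b \<noteq> j" by auto
    moreover have "{j, b} = {b, j}" "A - {b} - {j} = A - {b, j}" by auto
    ultimately show "G b j = - (pair_sign b j * x ({b, j}, sqfree_exp (A - {b, j})))"
      by (simp add: G_def pair_sign_swap[of b j])
  qed
  finally show ?thesis by simp
qed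

lemma coeff2_cycle_eq_0:
  assumes "kdiff m K x = (\<lambda>_. 0)" "A \<subseteq> N12" "\<not> (N1 \<subseteq> A \<and> N2 \<subseteq> A)"
  shows "coeff2 N1 N2 A x = 0"
proof (cases "N2 \<subseteq> A")
  case True
  with assms have "coeff2 N2 N1 A x = 0" by (intro coeff2_cycle_eq_0_if_not_supset) auto
  then show ?thesis using coeff2_swap[OF disjoint, of A x] by simp
qed (use assms in \<open>auto intro: coeff2_cycle_eq_0_if_not_supset\<close>)

lemma kmult_pair_N12:
  assumes "a \<in> N1" "b \<in> N2"
  shows "kmult m K f g ({a, b}, sqfree_exp (N12 - {a, b})) = (\<Sum>A\<in>Pow N12.
      ssign (A \<inter> {a, b}) ({a, b} - A) * f (A \<inter> {a, b}, sqfree_exp (A - {a, b}))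
        * g ({a, b} - A, sqfree_exp (N12 - {a, b} - A)))"
proof -
  have "N12 - {a, b} \<in> K" using assms by (intro face_of_subset) auto
  then have "kmult m K f g ({a, b}, sqfree_exp (N12 - {a, b}))
      = (\<Sum>A\<in>Pow ({a, b} \<union> (N12 - {a, b})).
      ssign (A \<inter> {a, b}) ({a, b} - A) * f (A \<inter> {a, b}, sqfree_exp (A - {a, b}))
        * g ({a, b} - A, sqfree_exp (N12 - {a, b} - A)))"
    using assms N12_subset by (intro kmult_sqfree_exp) auto
  moreover have "{a, b} \<union> (N12 - {a, b}) = N12" using assms by auto
  ultimately show ?thesis by (simp only:)
qed

lemma sum_kmult_pair_summands:
  fixes f g :: "'k::comm_ring_1 kchain"
  assumes "A \<subseteq> N12"
  shows "(\<Sum>a\<in>N1. \<Sum>b\<in>N2. pair_sign a b * (ssign (A \<inter> {a, b}) ({a, b} - A)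
      * kbar f (A \<inter> {a, b}, sqfree_exp (A - {a, b}))
      * g ({a, b} - A, sqfree_exp (N12 - {a, b} - A))))
    = - (coeff2 N1 N2 A f * coeff0 (N12 - A) g) - coeff0 A f * coeff2 N1 N2 (N12 - A) g
      + coeff1 N1 A f * coeff1 N2 (N12 - A) g - coeff1 N2 A f * coeff1 N1 (N12 - A) g"
    (is "?lhs = _")
proof -
  have "?lhs = (\<Sum>a\<in>N1. \<Sum>b\<in>N2.
      (if a \<in> A \<and> b \<in> A then - (pair_sign a b * f ({a, b}, sqfree_exp (A - {a, b})))
         * coeff0 (N12 - A) g else 0)
    + (if a \<in> N12 - A \<and> b \<in> N12 - A then - coeff0 A f
         * (pair_sign a b * g ({a, b}, sqfree_exp (N12 - A - {a, b}))) else 0)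
    + (if a \<in> A \<and> b \<in> N12 - A then f ({a}, sqfree_exp (A - {a}))
         * g ({b}, sqfree_exp (N12 - A - {b})) else 0)
    - (if b \<in> A \<and> a \<in> N12 - A then f ({b}, sqfree_exp (A - {b}))
         * g ({a}, sqfree_exp (N12 - A - {a})) else 0))"
    using disjoint by (intro sum.cong refl kmult_pair_summand) auto
  also have "\<dots> = - (\<Sum>a\<in>A \<inter> N1. \<Sum>b\<in>A \<inter> N2. pair_sign a b * f ({a, b}, sqfree_exp (A - {a, b})))
         * coeff0 (N12 - A) g
    - coeff0 A f * (\<Sum>a\<in>(N12 - A) \<inter> N1. \<Sum>b\<in>(N12 - A) \<inter> N2.
         pair_sign a b * g ({a, b}, sqfree_exp (N12 - A - {a, b})))
    + (\<Sum>a\<in>A \<inter> N1. \<Sum>b\<in>(N12 - A) \<inter> N2. f ({a}, sqfree_exp (A - {a}))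
         * g ({b}, sqfree_exp (N12 - A - {b})))
    - (\<Sum>b\<in>A \<inter> N2. \<Sum>a\<in>(N12 - A) \<inter> N1. f ({b}, sqfree_exp (A - {b}))
         * g ({a}, sqfree_exp (N12 - A - {a})))"
    unfolding sum_sum_if_conj[OF finite_N1 finite_N2] sum_sum_if_conj[OF finite_N2 finite_N1]
      sum.distrib sum_subtractf sum.swap[of _ N2 N1]
    by (simp add: sum_distrib_left sum_distrib_right sum_negf)
  also have "\<dots> = - (coeff2 N1 N2 A f * coeff0 (N12 - A) g) - coeff0 A f * coeff2 N1 N2 (N12 - A) g
      + coeff1 N1 A f * coeff1 N2 (N12 - A) g - coeff1 N2 A f * coeff1 N1 (N12 - A) g"
    by (simp add: coeff1_def coeff2_def sum_product)
  finally show ?thesis .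
qed

lemma pairing_expand:
  "pairing m K N1 N2 f g = (\<Sum>A\<in>Pow N12.
      - (coeff2 N1 N2 A f * coeff0 (N12 - A) g) - coeff0 A f * coeff2 N1 N2 (N12 - A) g
      + coeff1 N1 A f * coeff1 N2 (N12 - A) g - coeff1 N2 A f * coeff1 N1 (N12 - A) g)"
proof -
  have "pairing m K N1 N2 f g = (\<Sum>a\<in>N1. \<Sum>b\<in>N2.
      pair_sign a b * kmult m K (kbar f) g ({a, b}, sqfree_exp (N12 - {a, b})))"
    by (simp add: pairing_def coeff2_def Int_absorb1)
  also have "\<dots> = (\<Sum>A\<in>Pow N12. \<Sum>a\<in>N1. \<Sum>b\<in>N2.
      pair_sign a b * (ssign (A \<inter> {a, b}) ({a, b} - A) * kbar f (A \<inter> {a, b}, sqfree_exp (A - {a, b}))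
        * g ({a, b} - A, sqfree_exp (N12 - {a, b} - A))))"
    by (simp add: kmult_pair_N12 sum_distrib_left sum.swap[of _ "Pow N12"])
  also have "\<dots> = (\<Sum>A\<in>Pow N12.
      - (coeff2 N1 N2 A f * coeff0 (N12 - A) g) - coeff0 A f * coeff2 N1 N2 (N12 - A) g
      + coeff1 N1 A f * coeff1 N2 (N12 - A) g - coeff1 N2 A f * coeff1 N1 (N12 - A) g)"
    by (intro sum.cong refl sum_kmult_pair_summands) simp
  finally show ?thesis .
qed

lemma pairing_add_left:
  "pairing m K N1 N2 (\<lambda>x. f x + g x) h = pairing m K N1 N2 f h + pairing m K N1 N2 g h"
  and pairing_add_right:
  "pairing m K N1 N2 h (\<lambda>x. f x + g x) = pairing m K N1 N2 h f + pairing m K N1 N2 h g"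
  and pairing_smult_left: "pairing m K N1 N2 (\<lambda>x. c * f x) h = c * pairing m K N1 N2 f h"
  and pairing_smult_right: "pairing m K N1 N2 h (\<lambda>x. c * f x) = c * pairing m K N1 N2 h f"
  unfolding pairing_expand coeff0_add coeff1_add coeff2_add coeff0_smult coeff1_smult coeff2_smult
    sum_distrib_left sum.distrib[symmetric]
  by (auto simp: algebra_simps intro!: sum.cong)

lemma pairing_sum_left:
  "finite F \<Longrightarrow> pairing m K N1 N2 (\<lambda>x. \<Sum>b\<in>F. c b * v b x) h
    = (\<Sum>b\<in>F. c b * pairing m K N1 N2 (v b) h)"
  by (rule additive_homogeneous_sum[where L = "\<lambda>f. pairing m K N1 N2 f h"])
    (simp_all add: pairing_add_left pairing_smult_left)

lemma pairing_sum_right: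
  "finite F \<Longrightarrow> pairing m K N1 N2 h (\<lambda>x. \<Sum>b\<in>F. c b * v b x)
    = (\<Sum>b\<in>F. c b * pairing m K N1 N2 h (v b))"
  by (rule additive_homogeneous_sum[where L = "pairing m K N1 N2 h"])
    (simp_all add: pairing_add_right pairing_smult_right)

lemma coeff1_cross_cycle_boundary:
  assumes cycle: "kdiff m K x = (\<lambda>_. 0)" and A: "A \<subseteq> N12"
  shows "coeff1 N1 A x * coeff1 N2 (N12 - A) (kdiff m K w)
    = coeff1 N2 A x * coeff1 N1 (N12 - A) (kdiff m K w)"
proof -
  consider "N1 \<subseteq> A \<or> N2 \<subseteq> A"
    | "\<not> N1 \<subseteq> A" "\<not> N2 \<subseteq> A" "N1 \<subseteq> N12 - A \<or> N2 \<subseteq> N12 - A"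
    | "\<not> N1 \<subseteq> A" "\<not> N2 \<subseteq> A" "\<not> N1 \<subseteq> N12 - A" "\<not> N2 \<subseteq> N12 - A"
    by blast
  then show ?thesis
  proof cases
    case 1
    then have "N12 - A \<subseteq> N1 \<or> N12 - A \<subseteq> N2" by auto
    then show ?thesis by (simp add: coeff1_boundary_eq_0)
  next
    case 2
    then have "A \<inter> N1 = {} \<or> A \<inter> N2 = {}" by auto
    then have "coeff1 N1 A x = 0 \<or> coeff1 N2 A x = 0" by (auto simp: coeff1_def)
    moreover have "coeff1 N1 A x + coeff1 N2 A x = 0"
      using 2 A by (intro coeff1_cycle_sum_eq_0 cycle face_of_subset) auto
    ultimately show ?thesis by auto
  next
    case 3
    have "coeff1 N1 A x + coeff1 N2 A x = 0"
      using 3 A by (intro coeff1_cycle_sum_eq_0 cycle face_of_subset) auto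
    moreover have "coeff1 N1 (N12 - A) (kdiff m K w) + coeff1 N2 (N12 - A) (kdiff m K w) = 0"
      using 3 by (intro coeff1_boundary_sum_eq_0 face_of_subset) auto
    ultimately show ?thesis by (simp add: add_eq_0_iff)
  qed
qed

lemma pairing_cycle_boundary:
  assumes "kdiff m K x = (\<lambda>_. 0)"
  shows "pairing m K N1 N2 x (kdiff m K w) = 0"
  unfolding pairing_expand
proof (intro sum.neutral ballI)
  fix A assume "A \<in> Pow N12"
  then have A: "A \<subseteq> N12" by simp
  have "coeff2 N1 N2 A x * coeff0 (N12 - A) (kdiff m K w) = 0"
  proof (cases "A = N12")
    case False
    with A have "\<not> (N1 \<subseteq> A \<and> N2 \<subseteq> A)" by auto
    then show ?thesis using coeff2_cycle_eq_0[OF assms A] by simp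
  qed (simp add: coeff0_empty_kdiff)
  moreover have "coeff2 N1 N2 (N12 - A) (kdiff m K w) = 0" by (rule coeff2_boundary_eq_0) auto
  moreover note coeff1_cross_cycle_boundary[OF assms A, of w]
  ultimately show "- (coeff2 N1 N2 A x * coeff0 (N12 - A) (kdiff m K w))
      - coeff0 A x * coeff2 N1 N2 (N12 - A) (kdiff m K w)
      + coeff1 N1 A x * coeff1 N2 (N12 - A) (kdiff m K w)
      - coeff1 N2 A x * coeff1 N1 (N12 - A) (kdiff m K w) = 0"
    by simp
qed

lemma complement_eq_N2_iff: "A \<subseteq> N12 \<Longrightarrow> N12 - A = N2 \<longleftrightarrow> A = N1"
  using disjoint by auto

lemma pairing_boundary_nonface_cycle:
  assumes "c \<in> N2"
  shows "pairing m K N1 N2 (kdiff m K w) (nonface_cycle N2 c) = 0"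
proof -
  have "c \<notin> N1" using assms disjoint by auto
  then have "pairing m K N1 N2 (kdiff m K w) (nonface_cycle N2 c)
      = (\<Sum>A\<in>Pow N12. if A = N1 then coeff1 N1 N1 (kdiff m K w) else 0)"
    unfolding pairing_expand coeff0_nonface_cycle coeff2_nonface_cycle[OF disjoint]
      coeff1_nonface_cycle[OF finite_N2 assms]
    using assms by (intro sum.cong refl) (auto simp: complement_eq_N2_iff)
  also have "\<dots> = coeff1 N1 N1 (kdiff m K w)" by simp
  also have "\<dots> = 0" by (rule coeff1_boundary_eq_0) simp
  finally show ?thesis .
qed

lemma pairing_nonface_cycles:
  assumes "a \<in> N1" "b \<in> N2"
  shows "pairing m K N1 N2 (nonface_cycle N1 a) (nonface_cycle N2 b) = 1"
proof -
  have "a \<notin> N2" "b \<notin> N1" using assms disjoint by auto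
  then have "pairing m K N1 N2 (nonface_cycle N1 a) (nonface_cycle N2 b)
      = (\<Sum>A\<in>Pow N12. if A = N1 then 1 else 0)"
    unfolding pairing_expand coeff0_nonface_cycle coeff2_nonface_cycle[OF disjoint]
      coeff1_nonface_cycle[OF finite_N1 assms(1)] coeff1_nonface_cycle[OF finite_N2 assms(2)]
    using assms by (intro sum.cong refl) (auto simp: complement_eq_N2_iff)
  also have "\<dots> = 1" by simp
  finally show ?thesis .
qed

lemma pairing_nonface_cycles_eq_0_if_golod:
  assumes "golod TYPE('k::comm_ring_1) m K" "a \<in> N1" "b \<in> N2"
  shows "pairing m K N1 N2 (nonface_cycle N1 a) (nonface_cycle N2 b :: 'k kchain) = 0"
proof -
  obtain B :: "'k kchain set" where
    cycle: "\<And>g. g \<in> B \<Longrightarrow> kdiff m K g = (\<lambda>_. 0)"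
    and generate: "\<And>z. z \<in> kchains m K \<Longrightarrow> kdiff m K z = (\<lambda>_. 0) \<Longrightarrow> kpos z \<Longrightarrow>
       \<exists>F c w. finite F \<and> F \<subseteq> B \<and> z = (\<lambda>x. (\<Sum>g\<in>F. c g * g x) + kdiff m K w x)"
    and product: "\<And>g g'. g \<in> B \<Longrightarrow> g' \<in> B \<Longrightarrow> \<exists>w. kmult m K (kbar g) g' = kdiff m K w"
    using golod_products_are_boundaries[OF assms(1)] by blast
  define z1 where "z1 = (nonface_cycle N1 a :: 'k kchain)"
  define z2 where "z2 = (nonface_cycle N2 b :: 'k kchain)"
  have "z1 \<in> kchains m K" "kdiff m K z1 = (\<lambda>_. 0)" "kpos z1"
    unfolding z1_def using nonface_cycle_in_kchains[OF nonface1 assms(2)]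
      kdiff_nonface_cycle[OF N1_notin assms(2)] kpos_nonface_cycle by simp_all
  from generate[OF this] obtain F1 c1 w1 where F1: "finite F1" "F1 \<subseteq> B"
    and z1: "z1 = (\<lambda>x. (\<Sum>g\<in>F1. c1 g * g x) + kdiff m K w1 x)"
    by blast
  have "z2 \<in> kchains m K" "kdiff m K z2 = (\<lambda>_. 0)" "kpos z2"
    unfolding z2_def using nonface_cycle_in_kchains[OF nonface2 assms(3)]
      kdiff_nonface_cycle[OF N2_notin assms(3)] kpos_nonface_cycle by simp_all
  from generate[OF this] obtain F2 c2 w2 where F2: "finite F2" "F2 \<subseteq> B"
    and z2: "z2 = (\<lambda>x. (\<Sum>g\<in>F2. c2 g * g x) + kdiff m K w2 x)"
    by blast
  have generators: "pairing m K N1 N2 g g' = 0" if "g \<in> B" "g' \<in> B" for g g'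
    using product[OF that] coeff2_boundary_eq_0[of N12] by (auto simp: pairing_def)
  have "pairing m K N1 N2 g z2 = 0" if "g \<in> B" for g
  proof -
    have "pairing m K N1 N2 g z2
        = (\<Sum>g'\<in>F2. c2 g' * pairing m K N1 N2 g g') + pairing m K N1 N2 g (kdiff m K w2)"
      by (simp add: z2 pairing_add_right pairing_sum_right F2(1))
    also have "\<dots> = 0"
      using F2(2) that by (simp add: generators pairing_cycle_boundary cycle subset_iff)
    finally show ?thesis .
  qed
  then have "pairing m K N1 N2 z1 z2 = 0"
    using F1(2) by (simp add: z1 z2_def pairing_add_left pairing_sum_left F1(1) subset_iff
        pairing_boundary_nonface_cycle assms(3))
  then show ?thesis by (simp add: z1_def z2_def)
qed

end

theorem proposition2p6:
  fixes m :: nat and K :: "nat set set"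
  assumes "simplicial_complex m K"
    and "minimal_Taylor m K"
    and "(0::'k::comm_ring_1) \<noteq> 1"
    and "golod TYPE('k) m K"
  shows "\<forall>N1 N2. minimal_nonface m K N1 \<and> minimal_nonface m K N2 \<and> N1 \<noteq> N2
           \<longrightarrow> N1 \<inter> N2 \<noteq> {}"
proof (intro allI impI notI)
  fix N1 N2
  assume "minimal_nonface m K N1 \<and> minimal_nonface m K N2 \<and> N1 \<noteq> N2" "N1 \<inter> N2 = {}"
  then interpret disjoint_minimal_nonfaces m K N1 N2
    using assms(1,2) by unfold_locales auto
  obtain a b where "a \<in> N1" "b \<in> N2" using N1_nonempty N2_nonempty by blast
  then have "pairing m K N1 N2 (nonface_cycle N1 a) (nonface_cycle N2 b) = (1::'k)"
    and "pairing m K N1 N2 (nonface_cycle N1 a) (nonface_cycle N2 b) = (0::'k)"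
    using pairing_nonface_cycles pairing_nonface_cycles_eq_0_if_golod[OF assms(4)] by blast+
  with assms(3) show False by simp
qed

end
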